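(* Let $B$ be a commutative ring with identity and $A$ a dense subring of $B$. Then every minimal prime ideal of $A$ is of the form $Q\cap A$ for a unique minimal prime ideal $Q$ of $B$; and conversely, for every minimal prime ideal $Q$ of $B$, $Q\cap A$ is a minimal prime ideal of $A$.
   Context: All rings are commutative with identity; subrings contain the identity. A subring $A$ of $B$ is dense in $B$ if for every ideal $I$ of $B$ and every $b\in B\setminus \operatorname{rad}(I)$ there exists $a\in B\setminus\operatorname{rad}(I)$ with $ab\in A$. *)

theory Defs
  imports "HOL-Algebra.Algebra"
begin

definition rad_ideal :: "('a, 'b) ring_scheme \<Rightarrow> 'a set \<Rightarrow> 'a set" where
  "rad_ideal R I = {x \<in> carrier R. \<exists>n::nat. x [^]\<^bsub>R\<^esub> n \<in> I}"

definition minimal_prime :: "'a set \<Rightarrow> ('a, 'b) ring_scheme \<Rightarrow> bool" where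
  "minimal_prime P R \<longleftrightarrow> primeideal P R \<and> (\<forall>Q. primeideal Q R \<and> Q \<subseteq> P \<longrightarrow> Q = P)"

definition dense_subring :: "'a set \<Rightarrow> ('a, 'b) ring_scheme \<Rightarrow> bool" where
  "dense_subring A B \<longleftrightarrow> subring A B \<and>
     (\<forall>I. ideal I B \<longrightarrow> (\<forall>b \<in> carrier B - rad_ideal B I.
        \<exists>a \<in> carrier B - rad_ideal B I. a \<otimes>\<^bsub>B\<^esub> b \<in> A))"

end

theory Submission
  imports Defs
begin

text \<open>
  Every prime of the subring \<open>A\<close> contains the contraction of a prime of \<open>B\<close>: take a prime of
  \<open>B\<close> maximal among the ideals avoiding the multiplicative set \<open>A - P\<close>. Shrinking it to a
  minimal prime of \<open>B\<close> shows that every minimal prime of \<open>A\<close> is a contraction of a minimal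
  prime of \<open>B\<close>. Density makes contraction of primes order-reflecting: if \<open>b \<in> Q\<^sub>1 - Q\<^sub>2\<close>,
  density gives \<open>a \<notin> Q\<^sub>2\<close> with \<open>a b \<in> A\<close>, so \<open>a b \<in> Q\<^sub>1 \<inter> A\<close> but \<open>a b \<notin> Q\<^sub>2\<close>. This yields
  uniqueness, and also that contractions of minimal primes of \<open>B\<close> stay minimal.
\<close>

lemma (in primeideal) pow_mem_imp_mem:
  assumes "x \<in> carrier R" "x [^] (n::nat) \<in> I"
  shows "x \<in> I"
  using assms(2)
proof (induction n)
  case 0
  then show ?case using one_imp_carrier I_notcarr by simp
next
  case (Suc n)
  then show ?case using I_prime[of "x [^] n" x] assms(1) by auto
qed

lemma rad_ideal_primeideal:
  assumes "primeideal Q R"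
  shows "rad_ideal R Q = Q"
proof -
  interpret primeideal Q R by fact
  have "x [^]\<^bsub>R\<^esub> (1::nat) \<in> Q" if "x \<in> Q" for x
    using that Icarr by simp
  then show ?thesis
    unfolding rad_ideal_def using pow_mem_imp_mem Icarr by blast
qed

lemma subset_Zorn_nonempty_Inter:
  assumes "\<F> \<noteq> {}" and ch: "\<And>\<C>. \<lbrakk>\<C> \<noteq> {}; subset.chain \<F> \<C>\<rbrakk> \<Longrightarrow> \<Inter>\<C> \<in> \<F>"
  shows "\<exists>M\<in>\<F>. \<forall>N\<in>\<F>. N \<subseteq> M \<longrightarrow> N = M"
proof -
  have "\<exists>M\<in>uminus ` \<F>. \<forall>N\<in>uminus ` \<F>. M \<subseteq> N \<longrightarrow> N = M"
  proof (rule subset_Zorn_nonempty)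
    show "uminus ` \<F> \<noteq> {}" using assms(1) by simp
  next
    fix \<C> assume "\<C> \<noteq> {}" "subset.chain (uminus ` \<F>) \<C>"
    then have "uminus ` \<C> \<noteq> {}" "subset.chain \<F> (uminus ` \<C>)"
      by (auto simp: subset_chain_def)
    then have "\<Inter>(uminus ` \<C>) \<in> \<F>" by (rule ch)
    then show "\<Union>\<C> \<in> uminus ` \<F>" by (rule rev_image_eqI) (simp add: uminus_Inf image_image)
  qed
  then obtain M where M: "M \<in> \<F>" and max: "\<And>N. N \<in> \<F> \<Longrightarrow> - M \<subseteq> - N \<Longrightarrow> - N = - M"
    by (metis (no_types, lifting) image_eqI imageE)
  have "N = M" if "N \<in> \<F>" "N \<subseteq> M" for N
    using max[OF that(1)] that(2) by simp
  then show ?thesis using M by blast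
qed

lemma (in cring) chain_Inter_primeideal:
  assumes "\<Q> \<noteq> {}" and ch: "subset.chain {Q. primeideal Q R} \<Q>"
  shows "primeideal (\<Inter>\<Q>) R"
proof (rule primeidealI)
  have prime: "\<And>Q. Q \<in> \<Q> \<Longrightarrow> primeideal Q R" using ch by (auto simp: subset_chain_def)
  then show "ideal (\<Inter>\<Q>) R" using assms(1) i_Intersect primeideal.axioms(1) by metis
  obtain Q where "Q \<in> \<Q>" using assms(1) by blast
  then have "\<one> \<notin> \<Inter>\<Q>"
    using prime ideal.one_imp_carrier primeideal.I_notcarr primeideal.axioms(1) by fastforce
  then show "carrier R \<noteq> \<Inter>\<Q>" by auto
next
  fix a b assume ab: "a \<in> carrier R" "b \<in> carrier R" "a \<otimes> b \<in> \<Inter>\<Q>"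
  show "a \<in> \<Inter>\<Q> \<or> b \<in> \<Inter>\<Q>"
  proof (rule ccontr)
    assume "\<not> ?thesis"
    then obtain Q1 Q2 where "Q1 \<in> \<Q>" "a \<notin> Q1" "Q2 \<in> \<Q>" "b \<notin> Q2" by blast
    moreover have "Q1 \<subseteq> Q2 \<or> Q2 \<subseteq> Q1" using ch calculation by (auto simp: subset_chain_def)
    moreover have "\<And>Q. Q \<in> \<Q> \<Longrightarrow> a \<in> Q \<or> b \<in> Q"
      using ch ab primeideal.I_prime[of _ R a b] by (auto simp: subset_chain_def)
    ultimately show False by blast
  qed
qed (rule is_cring)

lemma (in cring) minimal_prime_below:
  assumes "primeideal P R"
  shows "\<exists>Q. minimal_prime Q R \<and> Q \<subseteq> P"
proof -
  define \<P> where "\<P> = {Q. primeideal Q R \<and> Q \<subseteq> P}"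
  have "\<exists>Q\<in>\<P>. \<forall>N\<in>\<P>. N \<subseteq> Q \<longrightarrow> N = Q"
  proof (rule subset_Zorn_nonempty_Inter)
    show "\<P> \<noteq> {}" using assms by (auto simp: \<P>_def)
  next
    fix \<Q> assume "\<Q> \<noteq> {}" and ch: "subset.chain \<P> \<Q>"
    then obtain Q0 where "Q0 \<in> \<Q>" by blast
    have \<Q>: "\<Q> \<subseteq> \<P>" using ch by (simp add: subset_chain_def)
    have "subset.chain {Q. primeideal Q R} \<Q>"
      using ch by (auto simp: subset_chain_def \<P>_def)
    with \<open>\<Q> \<noteq> {}\<close> have "primeideal (\<Inter>\<Q>) R" by (rule chain_Inter_primeideal)
    moreover have "\<Inter>\<Q> \<subseteq> P"
      using Inter_lower[OF \<open>Q0 \<in> \<Q>\<close>] \<open>Q0 \<in> \<Q>\<close> \<Q> by (auto simp: \<P>_def)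
    ultimately show "\<Inter>\<Q> \<in> \<P>" by (simp add: \<P>_def)
  qed
  then obtain Q where "Q \<in> \<P>" and min: "\<And>N. N \<in> \<P> \<Longrightarrow> N \<subseteq> Q \<Longrightarrow> N = Q" by blast
  then have "primeideal Q R" "Q \<subseteq> P" by (simp_all add: \<P>_def)
  moreover have "N = Q" if "primeideal N R" "N \<subseteq> Q" for N
    using min that \<open>Q \<subseteq> P\<close> by (simp add: \<P>_def)
  ultimately show ?thesis unfolding minimal_prime_def by blast
qed

lemma (in cring) maximal_disjoint_ideal_is_primeideal:
  assumes S: "\<one> \<in> S" "\<And>a b. a \<in> S \<Longrightarrow> b \<in> S \<Longrightarrow> a \<otimes> b \<in> S"
    and M: "ideal M R" "M \<inter> S = {}"
    and max: "\<And>J. ideal J R \<Longrightarrow> J \<inter> S = {} \<Longrightarrow> M \<subseteq> J \<Longrightarrow> J = M"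
  shows "primeideal M R"
proof (rule divides_ideal_prod_imp_primeideal[OF M(1)])
  show "M \<noteq> carrier R" using S(1) M(2) by blast
next
  fix I J assume I: "ideal I R" and J: "ideal J R" and IJ: "I \<cdot> J \<subseteq> M"
  have meets: "\<exists>s\<in>S. s \<in> M <+>\<^bsub>R\<^esub> K" if K: "ideal K R" "\<not> K \<subseteq> M" for K
  proof -
    have "M \<union> K \<subseteq> M <+>\<^bsub>R\<^esub> K"
      using genideal_self[of "M \<union> K"] union_genideal[OF M(1) K(1)]
        ideal.Icarr[OF M(1)] ideal.Icarr[OF K(1)] by blast
    then show ?thesis using max[OF add_ideals[OF M(1) K(1)]] K(2) by blast
  qed
  have sum_in_M: "K <+>\<^bsub>R\<^esub> L \<subseteq> M" if "ideal K R" "ideal L R" "K \<subseteq> M" "L \<subseteq> M" for K L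
    using genideal_minimal[OF M(1), of "K \<union> L"] union_genideal[OF that(1,2)] that(3,4) by simp
  show "I \<subseteq> M \<or> J \<subseteq> M"
  proof (rule ccontr)
    assume "\<not> ?thesis"
    then obtain s t where s: "s \<in> S" "s \<in> M <+>\<^bsub>R\<^esub> I" and t: "t \<in> S" "t \<in> M <+>\<^bsub>R\<^esub> J"
      using meets I J by meson
    have MI: "ideal (M <+>\<^bsub>R\<^esub> I) R" and MJ: "ideal (M <+>\<^bsub>R\<^esub> J) R"
      using add_ideals M(1) I J by blast+
    have "s \<otimes> t \<in> (M <+>\<^bsub>R\<^esub> I) \<cdot> (M <+>\<^bsub>R\<^esub> J)"
      using s(2) t(2) by (rule ideal_prod.prod)
    also have "\<dots> = M \<cdot> (M <+>\<^bsub>R\<^esub> J) <+>\<^bsub>R\<^esub> (I \<cdot> M <+>\<^bsub>R\<^esub> I \<cdot> J)"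
      using ideal_prod_distr[OF MJ M(1) I] ideal_prod_distr(1)[OF I M(1) J] by simp
    also have "\<dots> \<subseteq> M"
    proof (rule sum_in_M)
      show "I \<cdot> M <+>\<^bsub>R\<^esub> I \<cdot> J \<subseteq> M"
        by (rule sum_in_M) (use ideal_prod_inter[OF I M(1)] IJ in \<open>auto intro: ideal_prod_is_ideal M(1) I J\<close>)
    qed (use ideal_prod_inter[OF M(1) MJ] in \<open>auto intro: ideal_prod_is_ideal add_ideals M(1) I J MJ\<close>)
    finally have "s \<otimes> t \<in> M" .
    moreover have "s \<otimes> t \<in> S" using S(2) s(1) t(1) .
    ultimately show False using M(2) by blast
  qed
qed

lemma (in cring) primeideal_disjoint_multiplicative:
  assumes "\<one> \<in> S" "\<zero> \<notin> S" "\<And>a b. a \<in> S \<Longrightarrow> b \<in> S \<Longrightarrow> a \<otimes> b \<in> S"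
  shows "\<exists>P. primeideal P R \<and> P \<inter> S = {}"
proof -
  define \<I> where "\<I> = {I. ideal I R \<and> I \<inter> S = {}}"
  have "\<exists>M\<in>\<I>. \<forall>J\<in>\<I>. M \<subseteq> J \<longrightarrow> J = M"
  proof (rule subset_Zorn_nonempty)
    show "\<I> \<noteq> {}" using zeroideal assms(2) by (auto simp: \<I>_def)
  next
    fix \<C> assume "\<C> \<noteq> {}" and ch: "subset.chain \<I> \<C>"
    then have "ideal (\<Union>\<C>) R"
      using chain_Union_is_ideal[of \<C>] by (auto simp: subset_chain_def \<I>_def)
    moreover have "\<Union>\<C> \<inter> S = {}" using ch by (auto simp: subset_chain_def \<I>_def)
    ultimately show "\<Union>\<C> \<in> \<I>" by (simp add: \<I>_def)
  qed
  then obtain M where M: "ideal M R" "M \<inter> S = {}"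
    and max: "\<And>J. ideal J R \<Longrightarrow> J \<inter> S = {} \<Longrightarrow> M \<subseteq> J \<Longrightarrow> J = M"
    by (auto simp: \<I>_def)
  have "primeideal M R"
    by (rule maximal_disjoint_ideal_is_primeideal[OF assms(1,3) M max])
  with M(2) show ?thesis by blast
qed

lemma (in cring) primeideal_contraction:
  assumes "subring A R" "primeideal Q R"
  shows "primeideal (Q \<inter> A) (R\<lparr>carrier := A\<rparr>)"
proof -
  have A: "A \<subseteq> carrier R" using assms(1) by (rule subringE(1))
  have cA: "cring (R\<lparr>carrier := A\<rparr>)"
    using subcring_iff[OF A] subcringI'[OF assms(1)] by simp
  have "ring_hom_ring (R\<lparr>carrier := A\<rparr>) R id"
    by (rule ring_hom_ringI2[OF cring.axioms(1)[OF cA] ring_axioms], rule ring_hom_memI)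
       (use A in auto)
  from ring_hom_ring.primeideal_vimage[OF this cA assms(2)]
  have "primeideal {r \<in> A. r \<in> Q} (R\<lparr>carrier := A\<rparr>)" by simp
  moreover have "{r \<in> A. r \<in> Q} = Q \<inter> A" by blast
  ultimately show ?thesis by simp
qed

lemma (in cring) primeideal_contraction_below:
  assumes "subring A R" "primeideal P (R\<lparr>carrier := A\<rparr>)"
  shows "\<exists>Q. primeideal Q R \<and> Q \<inter> A \<subseteq> P"
proof -
  interpret P: primeideal P "R\<lparr>carrier := A\<rparr>" by fact
  have one: "\<one> \<in> A - P" using subringE(3)[OF assms(1)] P.one_imp_carrier P.I_notcarr by auto
  have zero: "\<zero> \<notin> A - P" using additive_subgroup.zero_closed[OF ideal.axioms(1)[OF P.is_ideal]] by simp
  have mult: "a \<otimes> b \<in> A - P" if "a \<in> A - P" "b \<in> A - P" for a b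
    using that subringE(6)[OF assms(1)] P.I_prime[of a b] by auto
  obtain Q where "primeideal Q R" "Q \<inter> (A - P) = {}"
    using primeideal_disjoint_multiplicative[OF one zero mult] by blast
  then show ?thesis by blast
qed

lemma dense_subring_primeideal_subset:
  assumes "dense_subring A R" "primeideal Q1 R" "primeideal Q2 R" "Q1 \<inter> A \<subseteq> Q2"
  shows "Q1 \<subseteq> Q2"
proof
  fix b assume "b \<in> Q1"
  show "b \<in> Q2"
  proof (rule ccontr)
    assume "b \<notin> Q2"
    have b: "b \<in> carrier R"
      using \<open>b \<in> Q1\<close> ideal.Icarr[OF primeideal.axioms(1)[OF assms(2)]] by blast
    have Q2: "ideal Q2 R" and rad: "rad_ideal R Q2 = Q2"
      using assms(3) by (simp_all add: primeideal.axioms(1) rad_ideal_primeideal)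
    have "\<forall>b \<in> carrier R - rad_ideal R Q2. \<exists>a \<in> carrier R - rad_ideal R Q2. a \<otimes>\<^bsub>R\<^esub> b \<in> A"
      using assms(1) Q2 unfolding dense_subring_def by blast
    then obtain a where a: "a \<in> carrier R" "a \<notin> Q2" and ab: "a \<otimes>\<^bsub>R\<^esub> b \<in> A"
      using b \<open>b \<notin> Q2\<close> unfolding rad by blast
    have "a \<otimes>\<^bsub>R\<^esub> b \<in> Q1"
      using ideal.I_l_closed[OF primeideal.axioms(1)[OF assms(2)] \<open>b \<in> Q1\<close> a(1)] .
    with ab assms(4) have "a \<otimes>\<^bsub>R\<^esub> b \<in> Q2" by blast
    then show False
      using primeideal.I_prime[OF assms(3) a(1) b] a(2) \<open>b \<notin> Q2\<close> by blast
  qed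
qed

lemma dense_subring_primeideal_contraction_inj:
  assumes "dense_subring A R" "primeideal Q1 R" "primeideal Q2 R" "Q1 \<inter> A = Q2 \<inter> A"
  shows "Q1 = Q2"
proof (rule subset_antisym)
  show "Q1 \<subseteq> Q2"
    by (rule dense_subring_primeideal_subset[OF assms(1-3)]) (use assms(4) in blast)
  show "Q2 \<subseteq> Q1"
    by (rule dense_subring_primeideal_subset[OF assms(1,3,2)]) (use assms(4) in blast)
qed

lemma (in cring) minimal_prime_subring_is_contraction:
  assumes "subring A R" "minimal_prime P (R\<lparr>carrier := A\<rparr>)"
  shows "\<exists>Q. minimal_prime Q R \<and> P = Q \<inter> A"
proof -
  have P: "primeideal P (R\<lparr>carrier := A\<rparr>)"
    and P_min: "\<And>P'. primeideal P' (R\<lparr>carrier := A\<rparr>) \<Longrightarrow> P' \<subseteq> P \<Longrightarrow> P' = P"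
    using assms(2) unfolding minimal_prime_def by auto
  obtain Q' where "primeideal Q' R" "Q' \<inter> A \<subseteq> P"
    using primeideal_contraction_below[OF assms(1) P] by blast
  moreover obtain Q where Q: "minimal_prime Q R" "Q \<subseteq> Q'"
    using minimal_prime_below[OF \<open>primeideal Q' R\<close>] by blast
  ultimately have "Q \<inter> A \<subseteq> P" by blast
  moreover have "primeideal (Q \<inter> A) (R\<lparr>carrier := A\<rparr>)"
    using primeideal_contraction[OF assms(1)] Q(1) by (simp add: minimal_prime_def)
  ultimately have "Q \<inter> A = P" by (rule P_min[rotated])
  with Q(1) show ?thesis by blast
qed

lemma (in cring) dense_subring_minimal_prime_contraction:
  assumes "dense_subring A R" "minimal_prime Q R"
  shows "minimal_prime (Q \<inter> A) (R\<lparr>carrier := A\<rparr>)"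
  unfolding minimal_prime_def
proof (intro conjI allI impI)
  have A: "subring A R" using assms(1) by (simp add: dense_subring_def)
  have Q: "primeideal Q R"
    and Q_min: "\<And>Q'. primeideal Q' R \<Longrightarrow> Q' \<subseteq> Q \<Longrightarrow> Q' = Q"
    using assms(2) unfolding minimal_prime_def by auto
  show "primeideal (Q \<inter> A) (R\<lparr>carrier := A\<rparr>)"
    by (rule primeideal_contraction[OF A Q])
  fix P assume P: "primeideal P (R\<lparr>carrier := A\<rparr>) \<and> P \<subseteq> Q \<inter> A"
  then obtain Q' where Q': "primeideal Q' R" "Q' \<inter> A \<subseteq> P"
    using primeideal_contraction_below[OF A] by blast
  with P have "Q' \<subseteq> Q"
    using dense_subring_primeideal_subset[OF assms(1) Q'(1) Q] by blast
  then have "Q' = Q" by (rule Q_min[OF Q'(1)])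
  with P Q'(2) show "P = Q \<inter> A" by blast
qed

theorem theorem3p6:
  fixes B :: "('a, 'b) ring_scheme" and A :: "'a set"
  assumes "cring B"
    and "dense_subring A B"
  shows "(\<forall>P. minimal_prime P (B\<lparr>carrier := A\<rparr>) \<longrightarrow>
            (\<exists>!Q. minimal_prime Q B \<and> P = Q \<inter> A))
       \<and> (\<forall>Q. minimal_prime Q B \<longrightarrow> minimal_prime (Q \<inter> A) (B\<lparr>carrier := A\<rparr>))"
proof (intro conjI allI impI)
  have A: "subring A B" using assms(2) by (simp add: dense_subring_def)
  fix P assume "minimal_prime P (B\<lparr>carrier := A\<rparr>)"
  then obtain Q where Q: "minimal_prime Q B" "P = Q \<inter> A"
    using cring.minimal_prime_subring_is_contraction[OF assms(1) A] by blast
  show "\<exists>!Q. minimal_prime Q B \<and> P = Q \<inter> A"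
  proof (rule ex1I)
    show "minimal_prime Q B \<and> P = Q \<inter> A" using Q by blast
    fix Q' assume Q': "minimal_prime Q' B \<and> P = Q' \<inter> A"
    show "Q' = Q"
      by (rule dense_subring_primeideal_contraction_inj[OF assms(2)])
        (use Q Q' in \<open>auto simp: minimal_prime_def\<close>)
  qed
next
  fix Q assume "minimal_prime Q B"
  then show "minimal_prime (Q \<inter> A) (B\<lparr>carrier := A\<rparr>)"
    by (rule cring.dense_subring_minimal_prime_contraction[OF assms])
qed

end
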